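(* Let $\Gamma\colon\mathbb{R}^d\to\mathbb{R}$ be differentiable with uniformly Lipschitz gradient, let $\varepsilon>0$, and define $\mathcal Y^{\mathrm n}(\theta,\xi)=\frac{1}{\epsilon(\theta)}\Gamma(\theta+\epsilon(\theta)\xi)$ for $\theta\in\mathbb{R}^d$, $\xi\in\mathbb{R}^m$ (here $m=d$). Suppose either (i) $\epsilon(\theta)=\varepsilon\sqrt{1+\|\theta-\theta^{\mathrm{ctr}}\|^2/\sigma_p^2}$ for fixed $\theta^{\mathrm{ctr}}\in\mathbb{R}^d$, $\sigma_p>0$; or (ii) $\epsilon(\theta)=\varepsilon\sqrt{1+\Gamma(\theta)-\Gamma^-}$, where $\Gamma^-$ is a constant with $\Gamma(\theta)\ge\Gamma^-$ for all $\theta$, and there is $\delta>0$ such that $\|\nabla\Gamma(\theta)\|\ge\delta\|\theta\|$ whenever $\|\theta\|\ge\delta^{-1}$. Then for every bounded set $S\subset\mathbb{R}^m$ there is $L<\infty$ such that $|\mathcal Y^{\mathrm n}(\theta',\xi)-\mathcal Y^{\mathrm n}(\theta,\xi)|\le L\|\theta'-\theta\|$ for all $\theta,\theta'\in\mathbb{R}^d$ and all $\xi\in S$.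
   Context: The function $\mathcal Y^{\mathrm n}$ is the normalized observation used in quasi-stochastic gradient descent / extremum seeking control with state-dependent probing gain $\epsilon(\theta)$; the probing signal $\xi$ takes values in a bounded set. *)

theory Defs
  imports "HOL-Analysis.Analysis"
begin

definition Yn :: "('a::euclidean_space \<Rightarrow> real) \<Rightarrow> ('a \<Rightarrow> real) \<Rightarrow> 'a \<Rightarrow> 'a \<Rightarrow> real" where
  "Yn eps \<Gamma> \<theta> \<xi> = \<Gamma> (\<theta> + eps \<theta> *\<^sub>R \<xi>) / eps \<theta>"

end

theory Submission
  imports Defs
begin

(* With q = theta + eps theta *R xi, the gradient of theta |-> Yn eps Gamma theta xi is
     grad Gamma q / eps + (grad Gamma q . xi / eps - Gamma q / eps^2) * grad eps,
   so the mean value inequality makes Yn uniformly Lipschitz for bounded xi as soon as eps is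
   bounded below, grad eps is bounded, |grad Gamma| <= A eps and |Gamma - c| <= B eps^2; the last
   two bounds move from theta to q because a Lipschitz gradient lets Gamma deviate from its
   linearization only quadratically. Both gains have the form eps = epsilon sqrt (1 + phi); in
   case (i) the bounds come from |theta - theta_ctr| <= sigma_p sqrt (1 + phi), in case (ii) from
   the descent-lemma estimate |grad Gamma|^2 <= 4 K (Gamma - Gamma^-). *)

lemma onorm_inner_le: "onorm (\<lambda>h. v \<bullet> h) \<le> norm (v::'a::euclidean_space)"
  by (rule onorm_le) (metis Cauchy_Schwarz_ineq2 mult.commute real_norm_def)

locale lipschitz_gradient =
  fixes \<Gamma> :: "'a::euclidean_space \<Rightarrow> real" and grad :: "'a \<Rightarrow> 'a" and K :: real
  assumes has_derivative_grad: "(\<Gamma> has_derivative (\<lambda>h. grad \<theta> \<bullet> h)) (at \<theta>)"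
    and lipschitz_grad: "norm (grad x - grad y) \<le> K * norm (x - y)"
    and K_pos: "K > 0"
begin

lemma first_order_error_le: "\<bar>\<Gamma> y - \<Gamma> x - grad x \<bullet> (y - x)\<bar> \<le> K * (norm (y - x))\<^sup>2"
proof -
  let ?f = "\<lambda>z. \<Gamma> z - grad x \<bullet> z"
  have "(?f has_derivative (\<lambda>h. (grad z - grad x) \<bullet> h)) (at z)" for z
    by (rule derivative_eq_intros has_derivative_grad refl)+ (simp add: inner_diff_left)
  then have "(?f has_derivative (\<lambda>h. (grad z - grad x) \<bullet> h)) (at z within closed_segment x y)" for z
    by (rule has_derivative_at_withinI)
  moreover have "onorm (\<lambda>h. (grad z - grad x) \<bullet> h) \<le> K * norm (y - x)"
    if "z \<in> closed_segment x y" for z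
  proof -
    have "onorm (\<lambda>h. (grad z - grad x) \<bullet> h) \<le> norm (grad z - grad x)"
      by (rule onorm_inner_le)
    also have "\<dots> \<le> K * norm (z - x)"
      by (rule lipschitz_grad)
    also have "\<dots> \<le> K * norm (y - x)"
      using segment_bound1[OF that] K_pos by (simp add: mult_left_mono)
    finally show ?thesis .
  qed
  ultimately have "norm (?f y - ?f x) \<le> K * norm (y - x) * norm (y - x)"
    by (intro differentiable_bound[OF convex_closed_segment]) auto
  then show ?thesis
    by (simp add: inner_diff_right power2_eq_square algebra_simps)
qed

lemma norm_grad_squared_le:
  assumes lower_bound: "\<And>\<theta>. \<Gamma> \<theta> \<ge> \<Gamma>m"
  shows "(norm (grad x))\<^sup>2 \<le> 4 * K * (\<Gamma> x - \<Gamma>m)"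
proof -
  define g where "g = grad x"
  define y where "y = x - (1 / (2 * K)) *\<^sub>R g"
  have "\<Gamma> y \<le> \<Gamma> x + g \<bullet> (y - x) + K * (norm (y - x))\<^sup>2"
    using first_order_error_le[of y x] unfolding g_def by linarith
  also have "\<dots> = \<Gamma> x - (norm g)\<^sup>2 / (4 * K)"
    unfolding y_def using K_pos
    by (simp add: power_divide power_mult_distrib power2_eq_square field_simps dot_square_norm[unfolded power2_eq_square])
  finally have "\<Gamma>m \<le> \<Gamma> x - (norm g)\<^sup>2 / (4 * K)"
    using lower_bound[of y] by linarith
  then show ?thesis
    using K_pos unfolding g_def by (simp add: field_simps)
qed

lemma norm_grad_le: "norm (grad y) \<le> norm (grad x) + K * norm (y - x)"
  using norm_triangle_ineq[of "grad x" "grad y - grad x"] lipschitz_grad[of y x] by simp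

end

locale probing_gain = lipschitz_gradient +
  fixes eps :: "'a::euclidean_space \<Rightarrow> real" and deps :: "'a \<Rightarrow> 'a" and e0 D A B c :: real
  assumes e0_pos: "e0 > 0" and eps_ge: "eps \<theta> \<ge> e0"
    and has_derivative_eps: "(eps has_derivative (\<lambda>h. deps \<theta> \<bullet> h)) (at \<theta>)"
    and norm_deps_le: "norm (deps \<theta>) \<le> D"
    and norm_grad_le_eps: "norm (grad \<theta>) \<le> A * eps \<theta>"
    and Gamma_deviation_le: "\<bar>\<Gamma> \<theta> - c\<bar> \<le> B * (eps \<theta>)\<^sup>2"
begin

lemma eps_pos: "eps \<theta> > 0"
  using e0_pos eps_ge[of \<theta>] by linarith

definition grad_Yn :: "'a \<Rightarrow> 'a \<Rightarrow> 'a" where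
  "grad_Yn \<theta> \<xi> =
    (1 / eps \<theta>) *\<^sub>R grad (\<theta> + eps \<theta> *\<^sub>R \<xi>) +
    (grad (\<theta> + eps \<theta> *\<^sub>R \<xi>) \<bullet> \<xi> / eps \<theta> - \<Gamma> (\<theta> + eps \<theta> *\<^sub>R \<xi>) / (eps \<theta>)\<^sup>2) *\<^sub>R deps \<theta>"

lemma has_derivative_Yn: "((\<lambda>\<theta>. Yn eps \<Gamma> \<theta> \<xi>) has_derivative (\<lambda>h. grad_Yn \<theta> \<xi> \<bullet> h)) (at \<theta>)"
proof -
  let ?q = "\<lambda>\<theta>. \<theta> + eps \<theta> *\<^sub>R \<xi>"
  have "(?q has_derivative (\<lambda>h. h + (deps \<theta> \<bullet> h) *\<^sub>R \<xi>)) (at \<theta>)"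
    by (rule derivative_eq_intros has_derivative_eps refl)+ simp
  from has_derivative_compose[OF this has_derivative_grad]
  have "((\<lambda>\<theta>. \<Gamma> (?q \<theta>)) has_derivative (\<lambda>h. grad (?q \<theta>) \<bullet> (h + (deps \<theta> \<bullet> h) *\<^sub>R \<xi>))) (at \<theta>)" .
  from has_derivative_divide'[OF this has_derivative_eps]
  show ?thesis
    unfolding Yn_def grad_Yn_def using eps_pos[of \<theta>]
    by (simp add: fun_eq_iff inner_add_left inner_add_right field_simps power2_eq_square)
qed

context
  fixes \<xi> :: 'a and R :: real
  assumes norm_xi_le: "norm \<xi> \<le> R"
begin

lemma norm_probe_offset_le: "norm (eps \<theta> *\<^sub>R \<xi>) \<le> R * eps \<theta>"
  using norm_xi_le eps_pos[of \<theta>] by (simp add: mult_left_mono mult.commute)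

lemma norm_grad_probe_le: "norm (grad (\<theta> + eps \<theta> *\<^sub>R \<xi>)) \<le> (A + K * R) * eps \<theta>"
proof -
  have "norm (grad (\<theta> + eps \<theta> *\<^sub>R \<xi>)) \<le> norm (grad \<theta>) + K * norm (eps \<theta> *\<^sub>R \<xi>)"
    using norm_grad_le[of "\<theta> + eps \<theta> *\<^sub>R \<xi>" \<theta>] by simp
  also have "\<dots> \<le> A * eps \<theta> + K * (R * eps \<theta>)"
    using norm_grad_le_eps norm_probe_offset_le K_pos by (intro add_mono mult_left_mono) auto
  finally show ?thesis by (simp add: algebra_simps)
qed

lemma abs_Gamma_probe_le:
  "\<bar>\<Gamma> (\<theta> + eps \<theta> *\<^sub>R \<xi>)\<bar> \<le> (\<bar>c\<bar> / e0\<^sup>2 + B + A * R + K * R\<^sup>2) * (eps \<theta>)\<^sup>2"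
proof -
  define e where "e = eps \<theta>"
  have e: "e \<ge> e0" "e > 0" unfolding e_def using eps_ge eps_pos by auto
  have "\<bar>\<Gamma> (\<theta> + e *\<^sub>R \<xi>) - \<Gamma> \<theta> - grad \<theta> \<bullet> (e *\<^sub>R \<xi>)\<bar> \<le> K * (norm (e *\<^sub>R \<xi>))\<^sup>2"
    using first_order_error_le[of "\<theta> + e *\<^sub>R \<xi>" \<theta>] by simp
  also have "\<dots> \<le> K * (R * e)\<^sup>2"
    using norm_probe_offset_le[of \<theta>] K_pos unfolding e_def
    by (intro mult_left_mono power_mono) auto
  finally have taylor: "\<bar>\<Gamma> (\<theta> + e *\<^sub>R \<xi>) - \<Gamma> \<theta> - grad \<theta> \<bullet> (e *\<^sub>R \<xi>)\<bar> \<le> K * (R * e)\<^sup>2" .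
  have linear: "\<bar>grad \<theta> \<bullet> (e *\<^sub>R \<xi>)\<bar> \<le> (A * e) * (R * e)"
    using Cauchy_Schwarz_ineq2[of "grad \<theta>" "e *\<^sub>R \<xi>"] norm_grad_le_eps[of \<theta>]
      norm_probe_offset_le[of \<theta>] unfolding e_def
    by (meson mult_mono norm_ge_zero order_trans)
  have "1 \<le> e\<^sup>2 / e0\<^sup>2"
    using e e0_pos by (simp add: power_mono)
  then have const: "\<bar>c\<bar> \<le> \<bar>c\<bar> / e0\<^sup>2 * e\<^sup>2"
    using mult_left_mono[of 1 "e\<^sup>2 / e0\<^sup>2" "\<bar>c\<bar>"] by simp
  have "\<bar>\<Gamma> (\<theta> + e *\<^sub>R \<xi>)\<bar> \<le> \<bar>c\<bar> / e0\<^sup>2 * e\<^sup>2 + B * e\<^sup>2 + (A * e) * (R * e) + K * (R * e)\<^sup>2"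
    using taylor linear const Gamma_deviation_le[of \<theta>] unfolding e_def by linarith
  then show ?thesis
    unfolding e_def by (simp add: algebra_simps power2_eq_square)
qed

lemma norm_grad_Yn_le:
  "norm (grad_Yn \<theta> \<xi>) \<le> (A + K * R) * (1 + R * D) + (\<bar>c\<bar> / e0\<^sup>2 + B + A * R + K * R\<^sup>2) * D"
proof -
  define e where "e = eps \<theta>"
  define q where "q = \<theta> + e *\<^sub>R \<xi>"
  have e: "e > 0" unfolding e_def by (rule eps_pos)
  have D: "norm (deps \<theta>) \<le> D" by (rule norm_deps_le)
  have gq: "norm (grad q) / e \<le> A + K * R"
    using norm_grad_probe_le[of \<theta>] e unfolding q_def e_def by (simp add: divide_le_eq)
  have "\<bar>grad q \<bullet> \<xi>\<bar> / e \<le> (norm (grad q) / e) * R"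
    using Cauchy_Schwarz_ineq2[of "grad q" \<xi>] norm_xi_le e
    by (simp add: divide_le_eq mult_left_mono order_trans)
  also have "\<dots> \<le> (A + K * R) * R"
    using gq norm_xi_le norm_ge_zero order_trans by (blast intro: mult_right_mono)
  finally have gq_xi: "\<bar>grad q \<bullet> \<xi>\<bar> / e \<le> (A + K * R) * R" .
  have Gq: "\<bar>\<Gamma> q\<bar> / e\<^sup>2 \<le> \<bar>c\<bar> / e0\<^sup>2 + B + A * R + K * R\<^sup>2"
    using abs_Gamma_probe_le[of \<theta>] e unfolding q_def e_def by (simp add: divide_le_eq)
  have "norm (grad_Yn \<theta> \<xi>) \<le>
      norm ((1 / e) *\<^sub>R grad q) + norm ((grad q \<bullet> \<xi> / e - \<Gamma> q / e\<^sup>2) *\<^sub>R deps \<theta>)"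
    unfolding grad_Yn_def e_def[symmetric] q_def[symmetric] by (rule norm_triangle_ineq)
  also have "\<dots> \<le> norm (grad q) / e + (\<bar>grad q \<bullet> \<xi>\<bar> / e + \<bar>\<Gamma> q\<bar> / e\<^sup>2) * norm (deps \<theta>)"
  proof -
    have "\<bar>grad q \<bullet> \<xi> / e - \<Gamma> q / e\<^sup>2\<bar> \<le> \<bar>grad q \<bullet> \<xi>\<bar> / e + \<bar>\<Gamma> q\<bar> / e\<^sup>2"
      using abs_triangle_ineq4[of "grad q \<bullet> \<xi> / e" "\<Gamma> q / e\<^sup>2"] e by (simp add: abs_divide)
    then show ?thesis
      using e by (simp add: mult_right_mono)
  qed
  also have "\<dots> \<le> (A + K * R) + ((A + K * R) * R + (\<bar>c\<bar> / e0\<^sup>2 + B + A * R + K * R\<^sup>2)) * D"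
  proof (intro add_mono mult_mono)
    have "0 \<le> \<bar>grad q \<bullet> \<xi>\<bar> / e" "0 \<le> \<bar>\<Gamma> q\<bar> / e\<^sup>2"
      using e by auto
    then show "0 \<le> (A + K * R) * R + (\<bar>c\<bar> / e0\<^sup>2 + B + A * R + K * R\<^sup>2)"
      using gq_xi Gq by linarith
  qed (use gq gq_xi Gq D in auto)
  finally show ?thesis by (simp add: algebra_simps)
qed

lemma Yn_lipschitz:
  "\<bar>Yn eps \<Gamma> \<theta>' \<xi> - Yn eps \<Gamma> \<theta> \<xi>\<bar> \<le>
    ((A + K * R) * (1 + R * D) + (\<bar>c\<bar> / e0\<^sup>2 + B + A * R + K * R\<^sup>2) * D) * norm (\<theta>' - \<theta>)"
proof -
  have "norm (Yn eps \<Gamma> \<theta>' \<xi> - Yn eps \<Gamma> \<theta> \<xi>) \<le>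
      ((A + K * R) * (1 + R * D) + (\<bar>c\<bar> / e0\<^sup>2 + B + A * R + K * R\<^sup>2) * D) * norm (\<theta>' - \<theta>)"
  proof (rule differentiable_bound[OF convex_UNIV])
    show "((\<lambda>\<theta>. Yn eps \<Gamma> \<theta> \<xi>) has_derivative (\<lambda>h. grad_Yn x \<xi> \<bullet> h)) (at x within UNIV)" for x
      by (rule has_derivative_Yn)
    show "onorm (\<lambda>h. grad_Yn x \<xi> \<bullet> h) \<le>
        (A + K * R) * (1 + R * D) + (\<bar>c\<bar> / e0\<^sup>2 + B + A * R + K * R\<^sup>2) * D" for x
      using onorm_inner_le norm_grad_Yn_le by (rule order_trans)
  qed auto
  then show ?thesis by simp
qed

end

end

context lipschitz_gradient
begin

lemma probing_gain_sqrt: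
  fixes \<phi> :: "'a \<Rightarrow> real" and d\<phi> :: "'a \<Rightarrow> 'a"
  assumes "\<epsilon> > 0"
    and \<phi>_nonneg: "\<And>\<theta>. \<phi> \<theta> \<ge> 0"
    and has_derivative_\<phi>: "\<And>\<theta>. (\<phi> has_derivative (\<lambda>h. d\<phi> \<theta> \<bullet> h)) (at \<theta>)"
    and norm_d\<phi>_le: "\<And>\<theta>. norm (d\<phi> \<theta>) \<le> M * sqrt (1 + \<phi> \<theta>)"
    and norm_grad_le_sqrt: "\<And>\<theta>. norm (grad \<theta>) \<le> G * sqrt (1 + \<phi> \<theta>)"
    and Gamma_deviation_le_\<phi>: "\<And>\<theta>. \<bar>\<Gamma> \<theta> - c\<bar> \<le> B * (1 + \<phi> \<theta>)"
  shows "probing_gain \<Gamma> grad K (\<lambda>\<theta>. \<epsilon> * sqrt (1 + \<phi> \<theta>))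
    (\<lambda>\<theta>. (\<epsilon> / (2 * sqrt (1 + \<phi> \<theta>))) *\<^sub>R d\<phi> \<theta>) \<epsilon> (\<epsilon> * M / 2) (G / \<epsilon>) (B / \<epsilon>\<^sup>2) c"
proof (intro probing_gain.intro probing_gain_axioms.intro)
  fix \<theta>
  define s where "s = sqrt (1 + \<phi> \<theta>)"
  have s: "s \<ge> 1" "s\<^sup>2 = 1 + \<phi> \<theta>"
    unfolding s_def using \<phi>_nonneg[of \<theta>] by auto
  show "lipschitz_gradient \<Gamma> grad K" by (rule lipschitz_gradient_axioms)
  show "\<epsilon> > 0" by fact
  show "\<epsilon> * sqrt (1 + \<phi> \<theta>) \<ge> \<epsilon>"
    using s \<open>\<epsilon> > 0\<close> unfolding s_def by simp
  show "((\<lambda>\<theta>. \<epsilon> * sqrt (1 + \<phi> \<theta>)) has_derivative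
      (\<lambda>h. ((\<epsilon> / (2 * sqrt (1 + \<phi> \<theta>))) *\<^sub>R d\<phi> \<theta>) \<bullet> h)) (at \<theta>)"
    using \<phi>_nonneg[of \<theta>]
    by (auto intro!: derivative_eq_intros has_derivative_\<phi> simp: field_simps)
  have "norm ((\<epsilon> / (2 * s)) *\<^sub>R d\<phi> \<theta>) = \<epsilon> / (2 * s) * norm (d\<phi> \<theta>)"
    using s \<open>\<epsilon> > 0\<close> by simp
  also have "\<dots> \<le> \<epsilon> / (2 * s) * (M * s)"
    using norm_d\<phi>_le[of \<theta>] s \<open>\<epsilon> > 0\<close> unfolding s_def by (intro mult_left_mono) auto
  finally show "norm ((\<epsilon> / (2 * sqrt (1 + \<phi> \<theta>))) *\<^sub>R d\<phi> \<theta>) \<le> \<epsilon> * M / 2"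
    using s unfolding s_def by simp
  show "norm (grad \<theta>) \<le> G / \<epsilon> * (\<epsilon> * sqrt (1 + \<phi> \<theta>))"
    using norm_grad_le_sqrt[of \<theta>] \<open>\<epsilon> > 0\<close> by simp
  show "\<bar>\<Gamma> \<theta> - c\<bar> \<le> B / \<epsilon>\<^sup>2 * (\<epsilon> * sqrt (1 + \<phi> \<theta>))\<^sup>2"
    using Gamma_deviation_le_\<phi>[of \<theta>] s \<open>\<epsilon> > 0\<close> unfolding s_def
    by (simp add: power_mult_distrib)
qed

lemma probing_gain_centered:
  assumes "\<epsilon> > 0" "\<sigma> > 0"
  shows "\<exists>deps e0 D A B c.
    probing_gain \<Gamma> grad K (\<lambda>\<theta>. \<epsilon> * sqrt (1 + (norm (\<theta> - \<theta>c))\<^sup>2 / \<sigma>\<^sup>2)) deps e0 D A B c"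
proof -
  define \<phi> where "\<phi> \<theta> = (norm (\<theta> - \<theta>c))\<^sup>2 / \<sigma>\<^sup>2" for \<theta>
  define G where "G = norm (grad \<theta>c)"
  have dist_sq_le: "(norm (\<theta> - \<theta>c))\<^sup>2 \<le> \<sigma>\<^sup>2 * (1 + \<phi> \<theta>)" for \<theta>
    unfolding \<phi>_def using \<open>\<sigma> > 0\<close> by (simp add: field_simps)
  have dist_le: "norm (\<theta> - \<theta>c) \<le> \<sigma> * sqrt (1 + \<phi> \<theta>)" for \<theta>
    using real_le_rsqrt[OF dist_sq_le[of \<theta>]] \<open>\<sigma> > 0\<close> by (simp add: real_sqrt_mult)
  have sqrt_ge: "1 \<le> sqrt (1 + \<phi> \<theta>)" for \<theta>
    unfolding \<phi>_def by simp
  have sqrt_le: "sqrt (1 + \<phi> \<theta>) \<le> 1 + \<phi> \<theta>" for \<theta>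
  proof -
    have "0 \<le> \<phi> \<theta>" unfolding \<phi>_def by simp
    then have "(1 + \<phi> \<theta>) * 1 \<le> (1 + \<phi> \<theta>) * (1 + \<phi> \<theta>)"
      by (intro mult_left_mono) auto
    with \<open>0 \<le> \<phi> \<theta>\<close> show ?thesis
      by (intro real_le_lsqrt) (auto simp: power2_eq_square)
  qed
  have "probing_gain \<Gamma> grad K (\<lambda>\<theta>. \<epsilon> * sqrt (1 + \<phi> \<theta>))
    (\<lambda>\<theta>. (\<epsilon> / (2 * sqrt (1 + \<phi> \<theta>))) *\<^sub>R ((2 / \<sigma>\<^sup>2) *\<^sub>R (\<theta> - \<theta>c))) \<epsilon> (\<epsilon> * (2 / \<sigma>) / 2)
    ((G + K * \<sigma>) / \<epsilon>) ((G * \<sigma> + K * \<sigma>\<^sup>2) / \<epsilon>\<^sup>2) (\<Gamma> \<theta>c)"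
  proof (rule probing_gain_sqrt[OF \<open>\<epsilon> > 0\<close>])
    fix \<theta>
    show "\<phi> \<theta> \<ge> 0" unfolding \<phi>_def by simp
    show "(\<phi> has_derivative (\<lambda>h. ((2 / \<sigma>\<^sup>2) *\<^sub>R (\<theta> - \<theta>c)) \<bullet> h)) (at \<theta>)"
      unfolding \<phi>_def power2_norm_eq_inner using \<open>\<sigma> > 0\<close>
      by (auto intro!: derivative_eq_intros simp: inner_commute inner_diff_right field_simps)
    have "norm ((2 / \<sigma>\<^sup>2) *\<^sub>R (\<theta> - \<theta>c)) = 2 / \<sigma>\<^sup>2 * norm (\<theta> - \<theta>c)"
      by (subst norm_scaleR) simp
    also have "\<dots> \<le> 2 / \<sigma>\<^sup>2 * (\<sigma> * sqrt (1 + \<phi> \<theta>))"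
      using dist_le[of \<theta>] by (intro mult_left_mono) auto
    also have "\<dots> = 2 / \<sigma> * sqrt (1 + \<phi> \<theta>)"
      using \<open>\<sigma> > 0\<close> by (simp add: power2_eq_square)
    finally show "norm ((2 / \<sigma>\<^sup>2) *\<^sub>R (\<theta> - \<theta>c)) \<le> 2 / \<sigma> * sqrt (1 + \<phi> \<theta>)" .
    have "norm (grad \<theta>) \<le> G + K * norm (\<theta> - \<theta>c)"
      using norm_grad_le[of \<theta> \<theta>c] unfolding G_def .
    also have "\<dots> \<le> G * sqrt (1 + \<phi> \<theta>) + K * (\<sigma> * sqrt (1 + \<phi> \<theta>))"
      using mult_left_mono[OF sqrt_ge[of \<theta>], of G] dist_le[of \<theta>] K_pos
      unfolding G_def by (intro add_mono mult_left_mono) auto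
    finally show "norm (grad \<theta>) \<le> (G + K * \<sigma>) * sqrt (1 + \<phi> \<theta>)"
      by (simp add: algebra_simps)
    have "\<bar>\<Gamma> \<theta> - \<Gamma> \<theta>c\<bar> \<le> G * norm (\<theta> - \<theta>c) + K * (norm (\<theta> - \<theta>c))\<^sup>2"
      using first_order_error_le[of \<theta> \<theta>c] Cauchy_Schwarz_ineq2[of "grad \<theta>c" "\<theta> - \<theta>c"]
      unfolding G_def by linarith
    also have "\<dots> \<le> G * (\<sigma> * (1 + \<phi> \<theta>)) + K * (\<sigma>\<^sup>2 * (1 + \<phi> \<theta>))"
      using dist_le[of \<theta>] sqrt_le[of \<theta>] dist_sq_le[of \<theta>] K_pos \<open>\<sigma> > 0\<close> unfolding G_def
      by (intro add_mono mult_left_mono order_trans[OF dist_le[of \<theta>]]) auto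
    finally show "\<bar>\<Gamma> \<theta> - \<Gamma> \<theta>c\<bar> \<le> (G * \<sigma> + K * \<sigma>\<^sup>2) * (1 + \<phi> \<theta>)"
      by (simp add: algebra_simps)
  qed
  then show ?thesis unfolding \<phi>_def by blast
qed

lemma probing_gain_suboptimality:
  assumes "\<epsilon> > 0" and lower_bound: "\<And>\<theta>. \<Gamma> \<theta> \<ge> \<Gamma>m"
  shows "\<exists>deps e0 D A B c. probing_gain \<Gamma> grad K (\<lambda>\<theta>. \<epsilon> * sqrt (1 + \<Gamma> \<theta> - \<Gamma>m)) deps e0 D A B c"
proof -
  define \<phi> where "\<phi> \<theta> = \<Gamma> \<theta> - \<Gamma>m" for \<theta>
  have \<phi>_nonneg: "\<phi> \<theta> \<ge> 0" for \<theta>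
    unfolding \<phi>_def using lower_bound[of \<theta>] by simp
  have "probing_gain \<Gamma> grad K (\<lambda>\<theta>. \<epsilon> * sqrt (1 + \<phi> \<theta>))
    (\<lambda>\<theta>. (\<epsilon> / (2 * sqrt (1 + \<phi> \<theta>))) *\<^sub>R grad \<theta>) \<epsilon> (\<epsilon> * (2 * sqrt K) / 2)
    (2 * sqrt K / \<epsilon>) (1 / \<epsilon>\<^sup>2) \<Gamma>m"
  proof (rule probing_gain_sqrt[OF \<open>\<epsilon> > 0\<close> \<phi>_nonneg])
    fix \<theta>
    show "(\<phi> has_derivative (\<lambda>h. grad \<theta> \<bullet> h)) (at \<theta>)"
      unfolding \<phi>_def using has_derivative_diff[OF has_derivative_grad has_derivative_const] by simp
    have "(norm (grad \<theta>))\<^sup>2 \<le> 4 * K * \<phi> \<theta>"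
      unfolding \<phi>_def by (rule norm_grad_squared_le[OF lower_bound])
    also have "\<dots> \<le> 4 * K * (1 + \<phi> \<theta>)"
      using K_pos by (intro mult_left_mono) auto
    also have "\<dots> = (2 * sqrt K * sqrt (1 + \<phi> \<theta>))\<^sup>2"
      using \<phi>_nonneg[of \<theta>] K_pos by (simp add: power_mult_distrib)
    finally have "(norm (grad \<theta>))\<^sup>2 \<le> (2 * sqrt K * sqrt (1 + \<phi> \<theta>))\<^sup>2" .
    moreover have "0 \<le> 2 * sqrt K * sqrt (1 + \<phi> \<theta>)"
      using \<phi>_nonneg[of \<theta>] K_pos by simp
    ultimately show "norm (grad \<theta>) \<le> 2 * sqrt K * sqrt (1 + \<phi> \<theta>)"
      by (rule power2_le_imp_le)
    then show "norm (grad \<theta>) \<le> 2 * sqrt K * sqrt (1 + \<phi> \<theta>)" .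
    show "\<bar>\<Gamma> \<theta> - \<Gamma>m\<bar> \<le> 1 * (1 + \<phi> \<theta>)"
      using \<phi>_nonneg[of \<theta>] unfolding \<phi>_def by simp
  qed
  then show ?thesis
    unfolding \<phi>_def add_diff_eq by blast
qed

end

theorem proposition3p1:
  fixes \<Gamma> :: "'a::euclidean_space \<Rightarrow> real"
    and grad :: "'a \<Rightarrow> 'a"
    and eps :: "'a \<Rightarrow> real"
    and \<epsilon> :: real
  assumes deriv: "\<And>\<theta>. (\<Gamma> has_derivative (\<lambda>h. grad \<theta> \<bullet> h)) (at \<theta>)"
    and lip: "\<exists>K. \<forall>x y. norm (grad x - grad y) \<le> K * norm (x - y)"
    and eps_pos: "\<epsilon> > 0"
    and cases:
      "(\<exists>\<theta>ctr \<sigma>p. \<sigma>p > 0 \<and>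
          eps = (\<lambda>\<theta>. \<epsilon> * sqrt (1 + (norm (\<theta> - \<theta>ctr))\<^sup>2 / \<sigma>p\<^sup>2)))
       \<or> (\<exists>\<Gamma>m \<delta>. (\<forall>\<theta>. \<Gamma> \<theta> \<ge> \<Gamma>m) \<and> \<delta> > 0 \<and>
          (\<forall>\<theta>. norm \<theta> \<ge> 1 / \<delta> \<longrightarrow> norm (grad \<theta>) \<ge> \<delta> * norm \<theta>) \<and>
          eps = (\<lambda>\<theta>. \<epsilon> * sqrt (1 + \<Gamma> \<theta> - \<Gamma>m)))"
  shows "\<forall>S::'a set. bounded S \<longrightarrow>
           (\<exists>L. \<forall>\<theta> \<theta>' \<xi>. \<xi> \<in> S \<longrightarrow>
              \<bar>Yn eps \<Gamma> \<theta>' \<xi> - Yn eps \<Gamma> \<theta> \<xi>\<bar> \<le> L * norm (\<theta>' - \<theta>))"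
proof (intro allI impI)
  fix S :: "'a set"
  assume "bounded S"
  then obtain R where R: "\<And>\<xi>. \<xi> \<in> S \<Longrightarrow> norm \<xi> \<le> R"
    by (auto simp: bounded_iff)
  obtain K0 where K0: "\<And>x y. norm (grad x - grad y) \<le> K0 * norm (x - y)"
    using lip by blast
  interpret lipschitz_gradient \<Gamma> grad "max K0 1"
  proof
    show "norm (grad x - grad y) \<le> max K0 1 * norm (x - y)" for x y
      using order_trans[OF K0 mult_right_mono[OF max.cobounded1 norm_ge_zero]] .
  qed (use deriv in auto)
  obtain deps e0 D A B c where "probing_gain \<Gamma> grad (max K0 1) eps deps e0 D A B c"
    using cases probing_gain_centered[OF eps_pos] probing_gain_suboptimality[OF eps_pos] by blast
  then show "\<exists>L. \<forall>\<theta> \<theta>' \<xi>. \<xi> \<in> S \<longrightarrow> \<bar>Yn eps \<Gamma> \<theta>' \<xi> - Yn eps \<Gamma> \<theta> \<xi>\<bar> \<le> L * norm (\<theta>' - \<theta>)"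
    using probing_gain.Yn_lipschitz R by blast
qed

end
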